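(* Let $u$ be a coherent utility on $L^0$ whose determining set $\mathcal{D}$ is $L^1$-closed and uniformly integrable, let $Y$ be a random variable or random vector, and let $W\in L^1_s(\mathsf{E}(\mathcal{D}\mid Y))$. Then $\mathcal{X}_{\mathsf{E}(\mathcal{D}\mid Y)}(W)\ne\emptyset$.
   Context: Let $(\Omega,\mathcal{F},\mathsf{P})$ be a probability space, $L^0$ the space of all real random variables, and $\mathcal{P}$ the set of probability measures on $\mathcal{F}$ absolutely continuous with respect to $\mathsf{P}$; measures are identified with their densities in $L^1(\mathsf{P})$. For $\mathsf{Q}\in\mathcal{P}$, $\mathsf{E}_\mathsf{Q}X:=\mathsf{E}_\mathsf{Q}X^+-\mathsf{E}_\mathsf{Q}X^-$ with the convention $\infty-\infty=-\infty$. A coherent utility on $L^0$ is a map $u:L^0\to[-\infty,\infty]$ of the form $u(X)=\inf_{\mathsf{Q}\in\mathcal{D}}\mathsf{E}_\mathsf{Q}X$ for a nonempty $\mathcal{D}\subseteq\mathcal{P}$; its determining set is the largest such set, $\{\mathsf{Q}\in\mathcal{P}:\mathsf{E}_\mathsf{Q}X\ge u(X)\ \forall X\in L^0\}$. For a random vector $Y$, $\mathsf{E}(\mathcal{D}\mid Y):=\{\mathsf{E}(Z\mid Y):Z\in\mathcal{D}\}$, and $u^f(X;Y):=\inf_{\mathsf{Q}\in\mathsf{E}(\mathcal{D}\mid Y)}\mathsf{E}_\mathsf{Q}X$. For $\mathcal{C}\subseteq\mathcal{P}$, $L^1_s(\mathcal{C})=\{X\in L^0:\lim_{n\to\infty}\sup_{\mathsf{Q}\in\mathcal{C}}\mathsf{E}_\mathsf{Q}|X|I(|X|>n)=0\}$.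 The set of extreme measures is $\mathcal{X}_{\mathsf{E}(\mathcal{D}\mid Y)}(W)=\{\mathsf{Q}\in\mathsf{E}(\mathcal{D}\mid Y):\mathsf{E}_\mathsf{Q}W=u^f(W;Y)\in(-\infty,\infty)\}$. *)

theory Defs
  imports "HOL-Probability.Probability"
begin

text \<open>Measures absolutely continuous w.r.t. the reference probability M, identified with densities.\<close>
definition Pset :: "'a measure \<Rightarrow> ('a \<Rightarrow> real) set" where
  "Pset M = {Z. Z \<in> borel_measurable M \<and> (AE x in M. 0 \<le> Z x) \<and> integrable M Z \<and> integral\<^sup>L M Z = 1}"

text \<open>E_Q X = E_Q X^+ - E_Q X^-, with the convention inf - inf = -inf.\<close>
definition EQ :: "'a measure \<Rightarrow> ('a \<Rightarrow> real) \<Rightarrow> ('a \<Rightarrow> real) \<Rightarrow> ereal" where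
  "EQ M Z X =
    (let p = (\<integral>\<^sup>+ x. ennreal (Z x * max (X x) 0) \<partial>M);
         n = (\<integral>\<^sup>+ x. ennreal (Z x * max (- X x) 0) \<partial>M)
     in if p = \<infinity> \<and> n = \<infinity> then - \<infinity> else enn2ereal p - enn2ereal n)"

definition coherent_utility :: "'a measure \<Rightarrow> (('a \<Rightarrow> real) \<Rightarrow> ereal) \<Rightarrow> bool" where
  "coherent_utility M u \<longleftrightarrow>
     (\<exists>D. D \<noteq> {} \<and> D \<subseteq> Pset M \<and> (\<forall>X \<in> borel_measurable M. u X = (INF Q\<in>D. EQ M Q X)))"

definition determining_set :: "'a measure \<Rightarrow> (('a \<Rightarrow> real) \<Rightarrow> ereal) \<Rightarrow> ('a \<Rightarrow> real) set" where
  "determining_set M u = {Q \<in> Pset M. \<forall>X \<in> borel_measurable M. u X \<le> EQ M Q X}"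

text \<open>Closedness in L^1(P) (the sets considered are closed under a.e. modification).\<close>
definition L1_closed :: "'a measure \<Rightarrow> ('a \<Rightarrow> real) set \<Rightarrow> bool" where
  "L1_closed M D \<longleftrightarrow>
     (\<forall>Zs f. (\<forall>k. Zs k \<in> D) \<and> f \<in> borel_measurable M \<and>
        (\<lambda>k. \<integral>\<^sup>+ x. ennreal \<bar>Zs k x - f x\<bar> \<partial>M) \<longlonglongrightarrow> 0 \<longrightarrow> f \<in> D)"

definition unif_integrable :: "'a measure \<Rightarrow> ('a \<Rightarrow> real) set \<Rightarrow> bool" where
  "unif_integrable M D \<longleftrightarrow>
     (\<lambda>n::nat. SUP Z\<in>D. \<integral>\<^sup>+ x. ennreal (\<bar>Z x\<bar> * indicator {y. \<bar>Z y\<bar> > real n} x) \<partial>M)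
       \<longlonglongrightarrow> 0"

definition L1s :: "'a measure \<Rightarrow> ('a \<Rightarrow> real) set \<Rightarrow> ('a \<Rightarrow> real) set" where
  "L1s M C = {X \<in> borel_measurable M.
     (\<lambda>n::nat. SUP Q\<in>C. \<integral>\<^sup>+ x. ennreal (Q x * \<bar>X x\<bar> * indicator {y. \<bar>X y\<bar> > real n} x) \<partial>M)
       \<longlonglongrightarrow> 0}"

definition cond_set :: "'a measure \<Rightarrow> ('a \<Rightarrow> real) set \<Rightarrow> ('a \<Rightarrow> 'b::euclidean_space) \<Rightarrow> ('a \<Rightarrow> real) set" where
  "cond_set M D Y = (\<lambda>Z. real_cond_exp M (vimage_algebra (space M) Y borel) Z) ` D"

definition uf :: "'a measure \<Rightarrow> ('a \<Rightarrow> real) set \<Rightarrow> ('a \<Rightarrow> real) \<Rightarrow> ('a \<Rightarrow> 'b::euclidean_space) \<Rightarrow> ereal" where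
  "uf M D X Y = (INF Q\<in>cond_set M D Y. EQ M Q X)"

definition extreme_set :: "'a measure \<Rightarrow> ('a \<Rightarrow> real) set \<Rightarrow> ('a \<Rightarrow> 'b::euclidean_space) \<Rightarrow> ('a \<Rightarrow> real) \<Rightarrow> ('a \<Rightarrow> real) set" where
  "extreme_set M D Y W = {Q \<in> cond_set M D Y. EQ M Q W = uf M D W Y \<and> \<bar>uf M D W Y\<bar> \<noteq> \<infinity>}"

end

theory Submission
  imports Defs
begin

(* The functional phi Z = E[E(Z | Y) W] is midpoint-affine on the convex set D and, because
   W \<in> L1_s(E(D | Y)) and conditional expectation is an L1-contraction, it is bounded and
   uniformly L1-continuous on D.  Weak compactness of D is avoided as follows: on the sublevel
   sets C_k = {phi \<le> inf phi + 1/(k+1)} minimise the strictly convex functional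
   H Z = E[1 / (1 + Z)].  Uniform integrability of D turns small midpoint defects of H into
   small L1 distances, so a sequence of near-minimisers of H on C_k is L1-Cauchy; a subsequence
   converges in L1 to some f, which lies in D by closedness and minimises phi by continuity.
   Then E_Q W = phi Z for Q = E(Z | Y), so E(f | Y) is an extreme measure. *)

section \<open>Expectations under densities\<close>

lemma PsetD:
  assumes "Q \<in> Pset M"
  shows "Q \<in> borel_measurable M" "integrable M Q" "AE x in M. 0 \<le> Q x" "integral\<^sup>L M Q = 1"
  using assms by (auto simp: Pset_def)

lemma Pset_midpoint: "Z1 \<in> Pset M \<Longrightarrow> Z2 \<in> Pset M \<Longrightarrow> (\<lambda>x. (Z1 x + Z2 x) / 2) \<in> Pset M"
  unfolding Pset_def by auto

lemma signed_difference_midpoint: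
  fixes p n p1 n1 p2 n2 :: ennreal
  defines "sd a b \<equiv> (if a = \<infinity> \<and> b = \<infinity> then - \<infinity> else enn2ereal a - enn2ereal b :: ereal)"
  assumes "p + p = p1 + p2" and "n + n = n1 + n2"
  shows "min (sd p1 n1) (sd p2 n2) \<le> sd p n"
  using assms(2,3)
  by (cases p; cases n; cases p1; cases n1; cases p2; cases n2)
    (auto simp: sd_def min_le_iff_disj ennreal_plus[symmetric] simp del: ennreal_plus)

lemma nn_integral_midpoint:
  assumes "Z1 \<in> Pset M" "Z2 \<in> Pset M"
    and [measurable]: "t \<in> borel_measurable M" and "\<And>x. 0 \<le> t x"
  shows "(\<integral>\<^sup>+ x. ennreal ((Z1 x + Z2 x) / 2 * t x) \<partial>M) + (\<integral>\<^sup>+ x. ennreal ((Z1 x + Z2 x) / 2 * t x) \<partial>M)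
       = (\<integral>\<^sup>+ x. ennreal (Z1 x * t x) \<partial>M) + (\<integral>\<^sup>+ x. ennreal (Z2 x * t x) \<partial>M)"
proof -
  have [measurable]: "Z1 \<in> borel_measurable M" "Z2 \<in> borel_measurable M"
    using assms(1,2) by (auto simp: Pset_def)
  have "AE x in M. 0 \<le> Z1 x" "AE x in M. 0 \<le> Z2 x"
    using assms(1,2) by (auto simp: Pset_def)
  then have "AE x in M. ennreal ((Z1 x + Z2 x) / 2 * t x) + ennreal ((Z1 x + Z2 x) / 2 * t x)
      = ennreal (Z1 x * t x) + ennreal (Z2 x * t x)"
  proof eventually_elim
    case (elim x)
    then show ?case
      using assms(4)[of x] by (simp add: ennreal_plus[symmetric] field_simps del: ennreal_plus)
  qed
  then show ?thesis
    by (subst (1 2) nn_integral_add[symmetric]) (auto intro: nn_integral_cong_AE)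
qed

lemma EQ_midpoint_ge_min:
  assumes "Z1 \<in> Pset M" "Z2 \<in> Pset M" and [measurable]: "X \<in> borel_measurable M"
  shows "min (EQ M Z1 X) (EQ M Z2 X) \<le> EQ M (\<lambda>x. (Z1 x + Z2 x) / 2) X"
  unfolding EQ_def Let_def
  by (intro signed_difference_midpoint nn_integral_midpoint[OF assms(1,2)]) auto

lemma determining_set_midpoint:
  assumes "Z1 \<in> determining_set M u" "Z2 \<in> determining_set M u"
  shows "(\<lambda>x. (Z1 x + Z2 x) / 2) \<in> determining_set M u"
proof -
  have "u X \<le> EQ M (\<lambda>x. (Z1 x + Z2 x) / 2) X" if "X \<in> borel_measurable M" for X
    using assms that EQ_midpoint_ge_min[of Z1 M Z2 X]
    by (auto simp: determining_set_def min_def split: if_splits intro: order_trans)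
  with assms show ?thesis
    by (auto simp: determining_set_def Pset_midpoint)
qed

lemma determining_set_nonempty:
  assumes "coherent_utility M u"
  shows "determining_set M u \<noteq> {}"
proof -
  obtain D where "D \<noteq> {}" "D \<subseteq> Pset M" "\<forall>X \<in> borel_measurable M. u X = (INF Q\<in>D. EQ M Q X)"
    using assms unfolding coherent_utility_def by blast
  then have "D \<subseteq> determining_set M u"
    by (auto simp: determining_set_def intro: INF_lower)
  with \<open>D \<noteq> {}\<close> show ?thesis by blast
qed

lemma EQ_eq_integral:
  assumes [measurable]: "Q \<in> borel_measurable M" "X \<in> borel_measurable M"
    and "AE x in M. 0 \<le> Q x" and "integrable M (\<lambda>x. Q x * X x)"
  shows "EQ M Q X = ereal (\<integral>x. Q x * X x \<partial>M)"
proof -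
  have "integrable M (\<lambda>x. Q x * max (X x) 0)" "integrable M (\<lambda>x. Q x * max (- X x) 0)"
    by (auto intro!: Bochner_Integration.integrable_bound[OF assms(4)] simp: abs_mult mult_left_mono)
  moreover have "AE x in M. 0 \<le> Q x * max (X x) 0" "AE x in M. 0 \<le> Q x * max (- X x) 0"
    using assms(3) by auto
  moreover have "(\<lambda>x. Q x * X x) = (\<lambda>x. Q x * max (X x) 0 - Q x * max (- X x) 0)"
    by (auto simp: fun_eq_iff max_def algebra_simps)
  ultimately show ?thesis
    unfolding EQ_def Let_def
    by (simp add: nn_integral_eq_integral integral_nonneg_AE)
qed

section \<open>Uniform tails\<close>

lemma SUP_tendsto_0_uniform:
  fixes T :: "'z \<Rightarrow> nat \<Rightarrow> ennreal"
  assumes "(\<lambda>n. SUP z\<in>A. T z n) \<longlonglongrightarrow> 0" and "0 < e"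
  obtains N where "\<And>z. z \<in> A \<Longrightarrow> T z N < e"
proof -
  obtain N where N: "(SUP z\<in>A. T z N) < e"
    using order_tendstoD(2)[OF assms] by (auto simp: eventually_sequentially)
  show thesis
    by (rule that) (rule SUP_lessD[OF N])
qed

lemma integral_less_if_nn_integral_less:
  assumes [measurable]: "f \<in> borel_measurable M" and "AE x in M. 0 \<le> f x"
    and less: "(\<integral>\<^sup>+ x. ennreal (f x) \<partial>M) < ennreal e"
  shows "integrable M f" and "integral\<^sup>L M f < e"
proof -
  show "integrable M f"
    using assms by (intro integrableI_nonneg) (auto simp: top.not_eq_extremum intro: order.strict_trans)
  then have "ennreal (integral\<^sup>L M f) < ennreal e"
    using assms by (simp add: nn_integral_eq_integral)
  then show "integral\<^sup>L M f < e"
    by (metis ennreal_leI not_le)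
qed

lemma abs_mult_le_truncation:
  fixes q w c :: real
  assumes "0 \<le> q" "0 \<le> c"
  shows "\<bar>q * w\<bar> \<le> c * q + (if c < \<bar>w\<bar> then q * \<bar>w\<bar> else 0)"
  using assms mult_left_mono[of "\<bar>w\<bar>" c q] mult_nonneg_nonneg[of c q]
  by (auto simp: abs_mult mult.commute)

lemma abs_diff_mult_le_truncation:
  fixes q1 q2 w c :: real
  assumes "0 \<le> q1" "0 \<le> q2" "0 \<le> c"
  shows "\<bar>q1 * w - q2 * w\<bar> \<le> c * \<bar>q1 - q2\<bar> + (if c < \<bar>w\<bar> then q1 * \<bar>w\<bar> + q2 * \<bar>w\<bar> else 0)"
proof -
  have eq: "\<bar>q1 * w - q2 * w\<bar> = \<bar>q1 - q2\<bar> * \<bar>w\<bar>"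
    by (simp add: abs_mult[symmetric] left_diff_distrib)
  show ?thesis
  proof (cases "c < \<bar>w\<bar>")
    case True
    have "\<bar>q1 - q2\<bar> * \<bar>w\<bar> \<le> (q1 + q2) * \<bar>w\<bar>"
      using assms by (intro mult_right_mono) auto
    moreover have "0 \<le> c * \<bar>q1 - q2\<bar>"
      using assms by simp
    ultimately show ?thesis
      using True eq by (simp add: distrib_right)
  next
    case False
    then show ?thesis
      using eq mult_right_mono[of "\<bar>w\<bar>" c "\<bar>q1 - q2\<bar>"] by (simp add: mult.commute)
  qed
qed


definition weighted_tail :: "('a \<Rightarrow> real) \<Rightarrow> ('a \<Rightarrow> real) \<Rightarrow> nat \<Rightarrow> 'a \<Rightarrow> real" where
  "weighted_tail Q W N x = Q x * \<bar>W x\<bar> * indicator {y. \<bar>W y\<bar> > real N} x"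

lemma weighted_tail_eq: "weighted_tail Q W N x = (if real N < \<bar>W x\<bar> then Q x * \<bar>W x\<bar> else 0)"
  by (simp add: weighted_tail_def)

lemma borel_measurable_weighted_tail [measurable]:
  assumes [measurable]: "Q \<in> borel_measurable M" "W \<in> borel_measurable M"
  shows "weighted_tail Q W N \<in> borel_measurable M"
  unfolding weighted_tail_def by measurable

context
  fixes M :: "'a measure" and C :: "('a \<Rightarrow> real) set" and W :: "'a \<Rightarrow> real"
  assumes W_L1s: "W \<in> L1s M C" and C_densities: "C \<subseteq> Pset M"
begin

lemma L1s_measurable [measurable]: "W \<in> borel_measurable M"
  using W_L1s by (simp add: L1s_def)

lemma L1s_densityD:
  assumes "Q \<in> C"
  shows "Q \<in> borel_measurable M" "integrable M Q" "AE x in M. 0 \<le> Q x" "integral\<^sup>L M Q = 1"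
  using assms C_densities by (auto simp: Pset_def)

lemma L1s_uniform_tail:
  assumes "0 < e"
  obtains N where "\<And>Q. Q \<in> C \<Longrightarrow> integrable M (weighted_tail Q W N)"
    and "\<And>Q. Q \<in> C \<Longrightarrow> integral\<^sup>L M (weighted_tail Q W N) < e"
proof -
  obtain N where N: "\<And>Q. Q \<in> C \<Longrightarrow> (\<integral>\<^sup>+ x. ennreal (weighted_tail Q W N x) \<partial>M) < ennreal e"
    using W_L1s assms unfolding L1s_def weighted_tail_def
    by (auto elim!: SUP_tendsto_0_uniform[where e = "ennreal e"])
  have "AE x in M. 0 \<le> weighted_tail Q W N x" if "Q \<in> C" for Q
    using L1s_densityD(3)[OF that] by (auto simp: weighted_tail_eq)
  with N show thesis
    by (intro that integral_less_if_nn_integral_less)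
      (auto intro: borel_measurable_weighted_tail L1s_densityD(1) L1s_measurable)
qed

lemma L1s_truncation_bound:
  assumes "Q \<in> C"
  shows "AE x in M. \<bar>Q x * W x\<bar> \<le> real N * Q x + weighted_tail Q W N x"
  using L1s_densityD(3)[OF assms]
proof eventually_elim
  case (elim x)
  then show ?case
    using abs_mult_le_truncation[OF elim, of "real N" "W x"] by (simp add: weighted_tail_eq)
qed

lemma L1s_truncation_bound_diff:
  assumes "Q1 \<in> C" "Q2 \<in> C"
  shows "AE x in M. \<bar>Q1 x * W x - Q2 x * W x\<bar>
    \<le> real N * \<bar>Q1 x - Q2 x\<bar> + weighted_tail Q1 W N x + weighted_tail Q2 W N x"
  using L1s_densityD(3)[OF assms(1)] L1s_densityD(3)[OF assms(2)]
proof eventually_elim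
  case (elim x)
  then show ?case
    using abs_diff_mult_le_truncation[OF elim, of "real N" "W x"]
    by (simp add: weighted_tail_eq add.assoc split: if_split_asm)
qed

lemma L1s_integrable:
  assumes "Q \<in> C"
  shows "integrable M (\<lambda>x. Q x * W x)"
proof -
  note [measurable] = L1s_densityD(1)[OF assms]
  obtain N where tail: "\<And>Q. Q \<in> C \<Longrightarrow> integrable M (weighted_tail Q W N)"
    and "\<And>Q. Q \<in> C \<Longrightarrow> integral\<^sup>L M (weighted_tail Q W N) < 1"
    by (rule L1s_uniform_tail[OF zero_less_one]) blast
  have int: "integrable M (\<lambda>x. real N * Q x + weighted_tail Q W N x)"
    using L1s_densityD(2)[OF assms] tail[OF assms] by simp
  have "AE x in M. norm (Q x * W x) \<le> norm (real N * Q x + weighted_tail Q W N x)"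
    using L1s_truncation_bound[OF assms, of N] by eventually_elim (simp add: order_trans[OF _ abs_ge_self])
  then show ?thesis
    by (rule Bochner_Integration.integrable_bound[OF int, rotated]) simp
qed

lemma L1s_EQ_eq_integral:
  assumes "Q \<in> C"
  shows "EQ M Q W = ereal (\<integral>x. Q x * W x \<partial>M)"
  using assms by (intro EQ_eq_integral L1s_densityD L1s_measurable L1s_integrable)

lemma L1s_integral_bounded:
  obtains B where "\<And>Q. Q \<in> C \<Longrightarrow> \<bar>\<integral>x. Q x * W x \<partial>M\<bar> \<le> B"
proof -
  obtain N where tail: "\<And>Q. Q \<in> C \<Longrightarrow> integrable M (weighted_tail Q W N)"
    "\<And>Q. Q \<in> C \<Longrightarrow> integral\<^sup>L M (weighted_tail Q W N) < 1"
    by (rule L1s_uniform_tail[OF zero_less_one]) blast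
  have "\<bar>\<integral>x. Q x * W x \<partial>M\<bar> \<le> real N + 1" if Q: "Q \<in> C" for Q
  proof -
    have "\<bar>\<integral>x. Q x * W x \<partial>M\<bar> \<le> (\<integral>x. \<bar>Q x * W x\<bar> \<partial>M)"
      by (rule integral_abs_bound)
    also have "\<dots> \<le> (\<integral>x. real N * Q x + weighted_tail Q W N x \<partial>M)"
      using L1s_integrable[OF Q] L1s_densityD(2)[OF Q] tail(1)[OF Q] L1s_truncation_bound[OF Q]
      by (intro integral_mono_AE) auto
    also have "\<dots> = real N + integral\<^sup>L M (weighted_tail Q W N)"
      using L1s_densityD(2,4)[OF Q] tail(1)[OF Q] by simp
    finally show ?thesis
      using tail(2)[OF Q] by linarith
  qed
  then show thesis
    by (rule that)
qed

lemma L1s_integral_uniformly_continuous: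
  assumes "0 < e"
  shows "\<exists>d>0. \<forall>Q1\<in>C. \<forall>Q2\<in>C. (\<integral>x. \<bar>Q1 x - Q2 x\<bar> \<partial>M) < d \<longrightarrow>
    \<bar>(\<integral>x. Q1 x * W x \<partial>M) - (\<integral>x. Q2 x * W x \<partial>M)\<bar> < e"
proof -
  obtain N where tail: "\<And>Q. Q \<in> C \<Longrightarrow> integrable M (weighted_tail Q W N)"
    "\<And>Q. Q \<in> C \<Longrightarrow> integral\<^sup>L M (weighted_tail Q W N) < e / 3"
    by (rule L1s_uniform_tail[of "e / 3"]) (use assms in auto)
  define d where "d = e / (3 * (real N + 1))"
  have "\<bar>(\<integral>x. Q1 x * W x \<partial>M) - (\<integral>x. Q2 x * W x \<partial>M)\<bar> < e"
    if Q: "Q1 \<in> C" "Q2 \<in> C" and close: "(\<integral>x. \<bar>Q1 x - Q2 x\<bar> \<partial>M) < d" for Q1 Q2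
  proof -
    have int: "integrable M (\<lambda>x. \<bar>Q1 x - Q2 x\<bar>)"
      using L1s_densityD(2) Q by auto
    have "\<bar>(\<integral>x. Q1 x * W x \<partial>M) - (\<integral>x. Q2 x * W x \<partial>M)\<bar> \<le> (\<integral>x. \<bar>Q1 x * W x - Q2 x * W x\<bar> \<partial>M)"
      using L1s_integrable[OF Q(1)] L1s_integrable[OF Q(2)]
      by (simp flip: Bochner_Integration.integral_diff)
    also have "\<dots> \<le> (\<integral>x. real N * \<bar>Q1 x - Q2 x\<bar> + weighted_tail Q1 W N x + weighted_tail Q2 W N x \<partial>M)"
      using L1s_integrable[OF Q(1)] L1s_integrable[OF Q(2)] int tail(1)[OF Q(1)] tail(1)[OF Q(2)]
        L1s_truncation_bound_diff[OF Q]
      by (intro integral_mono_AE) auto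
    also have "\<dots> = real N * (\<integral>x. \<bar>Q1 x - Q2 x\<bar> \<partial>M)
        + integral\<^sup>L M (weighted_tail Q1 W N) + integral\<^sup>L M (weighted_tail Q2 W N)"
      using int tail(1)[OF Q(1)] tail(1)[OF Q(2)] by simp
    also have "real N * (\<integral>x. \<bar>Q1 x - Q2 x\<bar> \<partial>M) \<le> e / 3"
    proof -
      have "real N * (\<integral>x. \<bar>Q1 x - Q2 x\<bar> \<partial>M) \<le> real N * d"
        using close by (intro mult_left_mono) auto
      also have "\<dots> \<le> e / 3"
        using assms by (simp add: d_def field_simps)
      finally show ?thesis .
    qed
    finally show ?thesis
      using tail(2)[OF Q(1)] tail(2)[OF Q(2)] by linarith
  qed
  moreover have "0 < d"
    using assms by (simp add: d_def)
  ultimately show ?thesis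
    by blast
qed

end

section \<open>Conditional expectations of densities\<close>

context sigma_finite_subalgebra
begin

lemma real_cond_exp_Pset: "Z \<in> Pset M \<Longrightarrow> real_cond_exp M F Z \<in> Pset M"
  unfolding Pset_def using real_cond_exp_int[of Z] real_cond_exp_pos[of Z] by auto

lemma real_cond_exp_midpoint:
  assumes "integrable M f" "integrable M g"
  shows "AE x in M. real_cond_exp M F (\<lambda>x. (f x + g x) / 2) x
    = (real_cond_exp M F f x + real_cond_exp M F g x) / 2"
proof -
  have "integrable M (\<lambda>x. f x + g x)"
    using assms by simp
  from real_cond_exp_cdiv[OF this, of 2] real_cond_exp_add[OF assms]
  show ?thesis
    by eventually_elim simp
qed

lemma real_cond_exp_L1_norm_le:
  assumes "integrable M f"
  shows "(\<integral>x. \<bar>real_cond_exp M F f x\<bar> \<partial>M) \<le> (\<integral>x. \<bar>f x\<bar> \<partial>M)"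
proof -
  note [measurable] = borel_measurable_integrable[OF assms]
  have "ennreal (\<integral>x. \<bar>real_cond_exp M F f x\<bar> \<partial>M) = (\<integral>\<^sup>+ x. ennreal \<bar>real_cond_exp M F f x\<bar> \<partial>M)"
    using real_cond_exp_int(1)[OF assms] by (simp add: nn_integral_eq_integral)
  also have "\<dots> \<le> (\<integral>\<^sup>+ x. nn_cond_exp M F (\<lambda>x. ennreal \<bar>f x\<bar>) x \<partial>M)"
    using real_cond_exp_abs[of f] by (intro nn_integral_mono_AE) auto
  also have "\<dots> = (\<integral>\<^sup>+ x. ennreal \<bar>f x\<bar> \<partial>M)"
    using nn_cond_exp_intg[of "\<lambda>_. 1" "\<lambda>x. ennreal \<bar>f x\<bar>"] by simp
  also have "\<dots> = ennreal (\<integral>x. \<bar>f x\<bar> \<partial>M)"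
    using assms by (simp add: nn_integral_eq_integral)
  finally show ?thesis
    by (simp add: ennreal_le_iff)
qed

lemma real_cond_exp_L1_dist_le:
  assumes "integrable M f" "integrable M g"
  shows "(\<integral>x. \<bar>real_cond_exp M F f x - real_cond_exp M F g x\<bar> \<partial>M) \<le> (\<integral>x. \<bar>f x - g x\<bar> \<partial>M)"
proof -
  have "(\<integral>x. \<bar>real_cond_exp M F f x - real_cond_exp M F g x\<bar> \<partial>M)
      = (\<integral>x. \<bar>real_cond_exp M F (\<lambda>x. f x - g x) x\<bar> \<partial>M)"
    using real_cond_exp_diff[OF assms] by (intro integral_cong_AE) auto
  also have "\<dots> \<le> (\<integral>x. \<bar>f x - g x\<bar> \<partial>M)"
    using assms by (intro real_cond_exp_L1_norm_le) auto
  finally show ?thesis .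
qed

end

section \<open>A uniformly convex functional\<close>

definition inv1p :: "real \<Rightarrow> real" where
  "inv1p t = 1 / (1 + max t 0)"

lemma inv1p_bounds: "0 \<le> inv1p t" "inv1p t \<le> 1"
  unfolding inv1p_def by auto

lemma borel_measurable_inv1p [measurable]: "inv1p \<in> borel_measurable borel"
  unfolding inv1p_def by measurable

lemma (in finite_measure) integrable_inv1p [simp]:
  assumes [measurable]: "Z \<in> borel_measurable M"
  shows "integrable M (\<lambda>x. inv1p (Z x))"
  using inv1p_bounds by (intro integrable_const_bound[where B = 1]) auto

lemma (in prob_space) abs_integral_inv1p_le_1:
  assumes [measurable]: "Z \<in> borel_measurable M"
  shows "\<bar>\<integral>x. inv1p (Z x) \<partial>M\<bar> \<le> 1"
  using integral_ge_const[of "\<lambda>x. inv1p (Z x)" 0] integral_le_const[of "\<lambda>x. inv1p (Z x)" 1]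
  by (simp add: inv1p_bounds)

lemma inv1p_midpoint_defect:
  assumes "0 \<le> a" "0 \<le> b"
  shows "(inv1p a + inv1p b) / 2 - inv1p ((a + b) / 2) = (a - b)\<^sup>2 / (2 * (1 + a) * (1 + b) * (2 + a + b))"
proof -
  have "inv1p a = 1 / (1 + a)" "inv1p b = 1 / (1 + b)" "inv1p ((a + b) / 2) = 2 / (2 + a + b)"
    using assms by (simp_all add: inv1p_def field_simps)
  then have "(inv1p a + inv1p b) / 2 - inv1p ((a + b) / 2) = (1 / (1 + a) + 1 / (1 + b)) / 2 - 2 / (2 + a + b)"
    by simp
  also have "\<dots> = (a - b)\<^sup>2 / (2 * (1 + a) * (1 + b) * (2 + a + b))"
  proof -
    have "1 + a \<noteq> 0" "1 + b \<noteq> 0" "2 + a + b \<noteq> 0"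
      using assms by linarith+
    then show ?thesis
      by (simp add: divide_simps) (simp add: power2_eq_square algebra_simps)
  qed
  finally show ?thesis .
qed

lemma abs_diff_le_inv1p_defect:
  fixes a b K d :: real
  assumes "0 \<le> a" "0 \<le> b" "0 \<le> K" "0 < d"
  shows "\<bar>a - b\<bar> \<le> (if K < a then a else 0) + (if K < b then b else 0) + d
    + 4 * (1 + K) ^ 3 / d * ((inv1p a + inv1p b) / 2 - inv1p ((a + b) / 2))"
proof -
  define defect where "defect = (inv1p a + inv1p b) / 2 - inv1p ((a + b) / 2)"
  define den where "den = 2 * (1 + a) * (1 + b) * (2 + a + b)"
  have "0 < den"
    using assms by (simp add: den_def)
  have defect_eq: "(a - b)\<^sup>2 = den * defect"
    using assms \<open>0 < den\<close> by (simp add: defect_def den_def inv1p_midpoint_defect)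
  have "0 \<le> defect"
    using defect_eq \<open>0 < den\<close> by (metis zero_le_power2 zero_le_mult_iff not_less)
  then have defect_term_nonneg: "0 \<le> 4 * (1 + K) ^ 3 / d * defect"
    using assms by simp
  show ?thesis
  proof (cases "K < a \<or> K < b")
    case True
    then show ?thesis
      using assms defect_term_nonneg by (auto simp flip: defect_def)
  next
    case False
    have "den \<le> 2 * (1 + K) * (1 + K) * (2 * (1 + K))"
      unfolding den_def using assms False by (intro mult_mono) auto
    also have "\<dots> = 4 * (1 + K) ^ 3"
      by (simp add: power3_eq_cube algebra_simps)
    finally have "(a - b)\<^sup>2 \<le> 4 * (1 + K) ^ 3 * defect"
      unfolding defect_eq using \<open>0 \<le> defect\<close> by (rule mult_right_mono)
    then have "(a - b)\<^sup>2 / d \<le> 4 * (1 + K) ^ 3 * defect / d"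
      using assms by (simp add: divide_right_mono)
    moreover have "\<bar>a - b\<bar> - d \<le> (a - b)\<^sup>2 / d"
    proof -
      have "0 \<le> (\<bar>a - b\<bar> - d)\<^sup>2" "0 \<le> \<bar>a - b\<bar> * d"
        using assms by simp_all
      then have "(\<bar>a - b\<bar> - d) * d \<le> \<bar>a - b\<bar>\<^sup>2"
        by (simp add: power2_eq_square algebra_simps)
      then show ?thesis
        using assms by (simp add: pos_le_divide_eq)
    qed
    ultimately show ?thesis
      using False by (simp add: defect_def)
  qed
qed

lemma unif_integrable_uniform_tail:
  assumes "D \<subseteq> Pset M" "unif_integrable M D" "0 < e"
  obtains N :: nat where "\<And>Z. Z \<in> D \<Longrightarrow> (\<integral>x. \<bar>Z x\<bar> * indicator {y. real N < \<bar>Z y\<bar>} x \<partial>M) < e"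
proof -
  obtain N where N: "\<And>Z. Z \<in> D \<Longrightarrow> (\<integral>\<^sup>+ x. ennreal (\<bar>Z x\<bar> * indicator {y. real N < \<bar>Z y\<bar>} x) \<partial>M) < ennreal e"
    using assms(2,3) unfolding unif_integrable_def
    by (auto elim!: SUP_tendsto_0_uniform[where e = "ennreal e"])
  have "(\<integral>x. \<bar>Z x\<bar> * indicator {y. real N < \<bar>Z y\<bar>} x \<partial>M) < e" if "Z \<in> D" for Z
  proof -
    have [measurable]: "Z \<in> borel_measurable M"
      using that assms(1) PsetD(1) by blast
    show ?thesis
      using N[OF that] by (intro integral_less_if_nn_integral_less) auto
  qed
  then show thesis
    by (rule that)
qed

lemma (in prob_space) L1_close_if_inv1p_defect_small:
  assumes "D \<subseteq> Pset M" "unif_integrable M D" "0 < e"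
  shows "\<exists>\<gamma>>0. \<forall>Z1\<in>D. \<forall>Z2\<in>D.
    ((\<integral>x. inv1p (Z1 x) \<partial>M) + (\<integral>x. inv1p (Z2 x) \<partial>M)) / 2 - (\<integral>x. inv1p ((Z1 x + Z2 x) / 2) \<partial>M) < \<gamma>
    \<longrightarrow> (\<integral>x. \<bar>Z1 x - Z2 x\<bar> \<partial>M) < e"
proof -
  obtain N where tail: "\<And>Z. Z \<in> D \<Longrightarrow> (\<integral>x. \<bar>Z x\<bar> * indicator {y. real N < \<bar>Z y\<bar>} x \<partial>M) < e / 4"
    using unif_integrable_uniform_tail[OF assms(1,2), of "e / 4"] assms(3) by auto
  define c where "c = 4 * (1 + real N) ^ 3 / (e / 4)"
  have "0 < c"
    using assms(3) by (simp add: c_def)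
  define defect where "defect Z1 Z2 = (\<lambda>x. (inv1p (Z1 x) + inv1p (Z2 x)) / 2 - inv1p ((Z1 x + Z2 x) / 2))"
    for Z1 Z2 :: "'a \<Rightarrow> real"
  have "(\<integral>x. \<bar>Z1 x - Z2 x\<bar> \<partial>M) < e"
    if Z: "Z1 \<in> D" "Z2 \<in> D"
      and gap: "((\<integral>x. inv1p (Z1 x) \<partial>M) + (\<integral>x. inv1p (Z2 x) \<partial>M)) / 2
        - (\<integral>x. inv1p ((Z1 x + Z2 x) / 2) \<partial>M) < e / 4 / c" for Z1 Z2
  proof -
    have P: "Z1 \<in> Pset M" "Z2 \<in> Pset M"
      using Z assms(1) by blast+
    note [measurable] = PsetD(1)[OF P(1)] PsetD(1)[OF P(2)]
    note int = PsetD(2)[OF P(1)] PsetD(2)[OF P(2)]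
    define U where "U Z = (\<lambda>x. \<bar>Z x\<bar> * indicator {y. real N < \<bar>Z y\<bar>} x)" for Z :: "'a \<Rightarrow> real"
    have int_U: "integrable M (U Z1)" "integrable M (U Z2)"
      unfolding U_def
      by (intro Bochner_Integration.integrable_bound[OF integrable_abs[OF int(1)]]
          Bochner_Integration.integrable_bound[OF integrable_abs[OF int(2)]]; simp add: indicator_def)+
    have int_defect: "integrable M (defect Z1 Z2)"
      unfolding defect_def by simp
    have "AE x in M. \<bar>Z1 x - Z2 x\<bar> \<le> U Z1 x + U Z2 x + e / 4 + c * defect Z1 Z2 x"
      using PsetD(3)[OF P(1)] PsetD(3)[OF P(2)]
    proof eventually_elim
      case (elim x)
      then show ?case
        using abs_diff_le_inv1p_defect[of "Z1 x" "Z2 x" "real N" "e / 4"] assms(3)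
        by (simp add: U_def c_def defect_def indicator_def split: if_split_asm)
    qed
    then have "(\<integral>x. \<bar>Z1 x - Z2 x\<bar> \<partial>M) \<le> (\<integral>x. U Z1 x + U Z2 x + e / 4 + c * defect Z1 Z2 x \<partial>M)"
      using int int_U int_defect by (intro integral_mono_AE) auto
    also have "\<dots> = integral\<^sup>L M (U Z1) + integral\<^sup>L M (U Z2) + e / 4 + c * integral\<^sup>L M (defect Z1 Z2)"
      using int_U int_defect by (simp add: prob_space)
    also have "integral\<^sup>L M (defect Z1 Z2) = ((\<integral>x. inv1p (Z1 x) \<partial>M) + (\<integral>x. inv1p (Z2 x) \<partial>M)) / 2
        - (\<integral>x. inv1p ((Z1 x + Z2 x) / 2) \<partial>M)"
      unfolding defect_def by simp
    also have "integral\<^sup>L M (U Z1) + integral\<^sup>L M (U Z2) + e / 4 + c * \<dots> < e"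
      using tail[OF Z(1)] tail[OF Z(2)] gap \<open>0 < c\<close> by (simp add: U_def field_simps)
    finally show ?thesis .
  qed
  moreover have "0 < e / 4 / c"
    using assms(3) \<open>0 < c\<close> by simp
  ultimately show ?thesis
    by blast
qed

section \<open>Minimising sequences\<close>

lemma nested_midpoint_convex_Cauchy:
  fixes H :: "'z \<Rightarrow> real" and d :: "'z \<Rightarrow> 'z \<Rightarrow> real" and mid :: "'z \<Rightarrow> 'z \<Rightarrow> 'z"
    and C :: "nat \<Rightarrow> 'z set"
  assumes nonempty: "\<And>k. C k \<noteq> {}" and decreasing: "\<And>k l. k \<le> l \<Longrightarrow> C l \<subseteq> C k"
    and subset: "\<And>k. C k \<subseteq> A"
    and mid_closed: "\<And>k a b. a \<in> C k \<Longrightarrow> b \<in> C k \<Longrightarrow> mid a b \<in> C k"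
    and H_bounded: "\<And>a. a \<in> A \<Longrightarrow> \<bar>H a\<bar> \<le> B"
    and uniformly_convex: "\<And>e. 0 < e \<Longrightarrow> \<exists>\<gamma>>0. \<forall>a\<in>A. \<forall>b\<in>A.
      (H a + H b) / 2 - H (mid a b) < \<gamma> \<longrightarrow> d a b < e"
  obtains zs where "\<forall>k. zs k \<in> C k" and "\<forall>e>0. \<exists>N. \<forall>i\<ge>N. \<forall>j\<ge>N. d (zs i) (zs j) < e"
proof -
  define c where "c k = Inf (H ` C k)" for k
  have bdd: "bdd_below (H ` C k)" for k
    using H_bounded subset by (intro bdd_belowI[of _ "- B"]) (force simp: abs_le_iff)
  have c_le: "c k \<le> H a" if "a \<in> C k" for a k
    unfolding c_def using bdd that by (simp add: cInf_lower)
  have "incseq c"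
    unfolding c_def using nonempty bdd decreasing by (intro monoI cInf_superset_mono) (auto, blast)
  have c_le_B: "c k \<le> B" for k
  proof -
    obtain a where a: "a \<in> C k"
      using nonempty by blast
    then have "c k \<le> H a"
      by (rule c_le)
    also have "H a \<le> B"
      using H_bounded[of a] subset[of k] a by (auto simp: abs_le_iff)
    finally show ?thesis .
  qed
  define L where "L = (SUP k. c k)"
  have "bdd_above (range c)"
    using c_le_B by (intro bdd_aboveI) auto
  then have c_le_L: "c k \<le> L" and "c \<longlonglongrightarrow> L" for k
    unfolding L_def using \<open>incseq c\<close> by (auto intro: cSUP_upper LIMSEQ_incseq_SUP)
  have "\<forall>k. \<exists>z. z \<in> C k \<and> H z < c k + inverse (Suc k)"
  proof
    fix k
    have "Inf (H ` C k) < c k + inverse (Suc k)"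
      by (simp add: c_def)
    then show "\<exists>z. z \<in> C k \<and> H z < c k + inverse (Suc k)"
      using cInf_lessD[of "H ` C k"] nonempty by blast
  qed
  from choice[OF this] obtain zs where "\<forall>k. zs k \<in> C k \<and> H (zs k) < c k + inverse (Suc k)" ..
  then have zs_in: "\<And>k. zs k \<in> C k" and zs_H: "\<And>k. H (zs k) < c k + inverse (Suc k)"
    by auto
  define \<delta> where "\<delta> n = L - c n + inverse (Suc n)" for n
  have "\<delta> \<longlonglongrightarrow> L - L + 0"
    unfolding \<delta>_def using \<open>c \<longlonglongrightarrow> L\<close> LIMSEQ_inverse_real_of_nat by (intro tendsto_intros)
  then have "\<delta> \<longlonglongrightarrow> 0"
    by simp
  have gap: "(H (zs i) + H (zs j)) / 2 - H (mid (zs i) (zs j)) < \<delta> n" if "n \<le> i" "n \<le> j" for n i j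
  proof -
    have "inverse (Suc i) \<le> inverse (Suc n)" "inverse (Suc j) \<le> inverse (Suc n)"
      using that by (simp_all add: le_imp_inverse_le)
    moreover have "c n \<le> H (mid (zs i) (zs j))"
      using zs_in decreasing that by (intro c_le mid_closed) blast+
    ultimately show ?thesis
      using zs_H[of i] zs_H[of j] c_le_L[of i] c_le_L[of j] unfolding \<delta>_def by argo
  qed
  have "\<exists>N. \<forall>i\<ge>N. \<forall>j\<ge>N. d (zs i) (zs j) < e" if e: "0 < e" for e
  proof -
    obtain \<gamma> where "0 < \<gamma>" and \<gamma>: "\<And>a b. a \<in> A \<Longrightarrow> b \<in> A \<Longrightarrow> (H a + H b) / 2 - H (mid a b) < \<gamma> \<Longrightarrow> d a b < e"
      using uniformly_convex[OF e] by blast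
    obtain N where "\<delta> N < \<gamma>"
      using order_tendstoD(2)[OF \<open>\<delta> \<longlonglongrightarrow> 0\<close> \<open>0 < \<gamma>\<close>] by (auto simp: eventually_sequentially)
    then show ?thesis
      using gap zs_in subset by (intro exI[of _ N] allI impI \<gamma>) (force, force, fastforce)
  qed
  with zs_in show thesis
    using that by blast
qed

lemma midpoint_convex_minimizing_Cauchy:
  fixes phi H :: "'z \<Rightarrow> real" and d :: "'z \<Rightarrow> 'z \<Rightarrow> real" and mid :: "'z \<Rightarrow> 'z \<Rightarrow> 'z"
  assumes "A \<noteq> {}" and mid_closed: "\<And>a b. a \<in> A \<Longrightarrow> b \<in> A \<Longrightarrow> mid a b \<in> A"
    and phi_convex: "\<And>a b. a \<in> A \<Longrightarrow> b \<in> A \<Longrightarrow> phi (mid a b) \<le> (phi a + phi b) / 2"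
    and "bdd_below (phi ` A)"
    and H_bounded: "\<And>a. a \<in> A \<Longrightarrow> \<bar>H a\<bar> \<le> B"
    and uniformly_convex: "\<And>e. 0 < e \<Longrightarrow> \<exists>\<gamma>>0. \<forall>a\<in>A. \<forall>b\<in>A.
      (H a + H b) / 2 - H (mid a b) < \<gamma> \<longrightarrow> d a b < e"
  obtains zs where "\<forall>k. zs k \<in> A" and "(\<lambda>k. phi (zs k)) \<longlonglongrightarrow> Inf (phi ` A)"
    and "\<forall>e>0. \<exists>N. \<forall>i\<ge>N. \<forall>j\<ge>N. d (zs i) (zs j) < e"
proof -
  define m where "m = Inf (phi ` A)"
  define C where "C k = {a \<in> A. phi a \<le> m + inverse (Suc k)}" for k
  have nonempty: "C k \<noteq> {}" for k
  proof -
    have "Inf (phi ` A) < m + inverse (Suc k)"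
      by (simp add: m_def)
    then show ?thesis
      using cInf_lessD[of "phi ` A"] \<open>A \<noteq> {}\<close> by (force simp: C_def)
  qed
  have decreasing: "C l \<subseteq> C k" if "k \<le> l" for k l
    using that by (auto simp: C_def intro: order_trans le_imp_inverse_le)
  have C_mid: "mid a b \<in> C k" if "a \<in> C k" "b \<in> C k" for a b k
    using that mid_closed phi_convex[of a b] by (fastforce simp: C_def)
  have C_subset: "C k \<subseteq> A" for k
    by (auto simp: C_def)
  obtain zs where zs: "\<forall>k. zs k \<in> C k"
    and Cauchy: "\<forall>e>0. \<exists>N. \<forall>i\<ge>N. \<forall>j\<ge>N. d (zs i) (zs j) < e"
    by (rule nested_midpoint_convex_Cauchy[where C = C and A = A and H = H and B = B and d = d and mid = mid])
      (use nonempty decreasing C_subset C_mid H_bounded uniformly_convex in blast)+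
  have lower: "m \<le> phi (zs k)" and upper: "phi (zs k) \<le> m + inverse (Suc k)" for k
    using zs \<open>bdd_below (phi ` A)\<close> by (auto simp: C_def m_def intro: cInf_lower)
  have "(\<lambda>k. m + inverse (Suc k)) \<longlonglongrightarrow> m"
    using tendsto_add[OF tendsto_const LIMSEQ_inverse_real_of_nat, of m] by simp
  then have "(\<lambda>k. phi (zs k)) \<longlonglongrightarrow> m"
    by (rule tendsto_sandwich[where f = "\<lambda>_. m", rotated 3]) (auto intro!: always_eventually lower upper[simplified])
  moreover have "\<forall>k. zs k \<in> A"
    using zs C_subset by blast
  ultimately show thesis
    using Cauchy that unfolding m_def by blast
qed

lemma uniformly_continuous_tendsto:
  fixes phi :: "'z \<Rightarrow> real" and d :: "'z \<Rightarrow> 'z \<Rightarrow> real"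
  assumes cont: "\<forall>e>0. \<exists>\<delta>>0. \<forall>a\<in>A. \<forall>b\<in>A. d a b < \<delta> \<longrightarrow> \<bar>phi a - phi b\<bar> < e"
    and "\<forall>k. zs k \<in> A" "f \<in> A" and "(\<lambda>k. d (zs k) f) \<longlonglongrightarrow> 0"
  shows "(\<lambda>k. phi (zs k)) \<longlonglongrightarrow> phi f"
  unfolding tendsto_iff dist_real_def
proof (intro allI impI)
  fix e :: real
  assume "0 < e"
  then obtain \<delta> where "0 < \<delta>" and \<delta>: "\<And>a b. a \<in> A \<Longrightarrow> b \<in> A \<Longrightarrow> d a b < \<delta> \<Longrightarrow> \<bar>phi a - phi b\<bar> < e"
    using cont by blast
  have "eventually (\<lambda>k. d (zs k) f < \<delta>) sequentially"
    using order_tendstoD(2)[OF assms(4) \<open>0 < \<delta>\<close>] .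
  then show "eventually (\<lambda>k. \<bar>phi (zs k) - phi f\<bar> < e) sequentially"
    by eventually_elim (use assms(2,3) \<delta> in blast)
qed

section \<open>Existence of minimisers\<close>

lemma L1_Cauchy_subseq_converges:
  fixes s :: "nat \<Rightarrow> 'a \<Rightarrow> real"
  assumes int [measurable]: "\<And>n. integrable M (s n)"
    and Cauchy: "\<forall>e>0. \<exists>N. \<forall>i\<ge>N. \<forall>j\<ge>N. (\<integral>x. \<bar>s i x - s j x\<bar> \<partial>M) < e"
  obtains r f where "strict_mono r" and "f \<in> borel_measurable M"
    and "(\<lambda>k. \<integral>\<^sup>+ x. ennreal \<bar>s (r k) x - f x\<bar> \<partial>M) \<longlonglongrightarrow> 0"
proof -
  obtain r where r: "strict_mono r" and "AE x in M. Cauchy (\<lambda>i. s (r i) x)"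
    by (rule cauchy_L1_AE_cauchy_subseq[where M = M and s = s]) (use int Cauchy in auto)
  define f where "f x = lim (\<lambda>i. s (r i) x)" for x
  have [measurable]: "f \<in> borel_measurable M"
    unfolding f_def by (rule borel_measurable_lim_metric) (use int in auto)
  have conv: "AE x in M. (\<lambda>i. s (r i) x) \<longlonglongrightarrow> f x"
    using \<open>AE x in M. Cauchy _\<close>
    by eventually_elim (simp add: f_def Cauchy_convergent_iff convergent_LIMSEQ_iff)
  have small: "(\<integral>\<^sup>+ x. ennreal \<bar>s (r i) x - f x\<bar> \<partial>M) \<le> ennreal e"
    if "0 < e" and N: "\<forall>i\<ge>N. \<forall>j\<ge>N. (\<integral>x. \<bar>s i x - s j x\<bar> \<partial>M) < e" and "N \<le> i" for e N i
  proof -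
    have rN: "N \<le> r k" if "N \<le> k" for k
      using seq_suble[OF r, of k] that by linarith
    have "(\<integral>\<^sup>+ x. ennreal \<bar>s (r i) x - f x\<bar> \<partial>M) = (\<integral>\<^sup>+ x. liminf (\<lambda>j. ennreal \<bar>s (r i) x - s (r j) x\<bar>) \<partial>M)"
    proof (rule nn_integral_cong_AE)
      show "AE x in M. ennreal \<bar>s (r i) x - f x\<bar> = liminf (\<lambda>j. ennreal \<bar>s (r i) x - s (r j) x\<bar>)"
        using conv
      proof eventually_elim
        case (elim x)
        then have "(\<lambda>j. ennreal \<bar>s (r i) x - s (r j) x\<bar>) \<longlonglongrightarrow> ennreal \<bar>s (r i) x - f x\<bar>"
          by (intro tendsto_ennrealI tendsto_intros)
        then show ?case
          by (rule lim_imp_Liminf[symmetric, rotated]) simp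
      qed
    qed
    also have "\<dots> \<le> liminf (\<lambda>j. \<integral>\<^sup>+ x. ennreal \<bar>s (r i) x - s (r j) x\<bar> \<partial>M)"
      by (rule nn_integral_liminf) simp
    also have "\<dots> \<le> liminf (\<lambda>j. ennreal e)"
    proof (intro Liminf_mono eventually_sequentiallyI)
      fix j
      assume "N \<le> j"
      have "(\<integral>\<^sup>+ x. ennreal \<bar>s (r i) x - s (r j) x\<bar> \<partial>M) = ennreal (\<integral>x. \<bar>s (r i) x - s (r j) x\<bar> \<partial>M)"
        using int[of "r i"] int[of "r j"] by (intro nn_integral_eq_integral) auto
      also have "\<dots> \<le> ennreal e"
        using N rN[OF \<open>N \<le> i\<close>] rN[OF \<open>N \<le> j\<close>] by (intro ennreal_leI) (auto intro: less_imp_le)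
      finally show "(\<integral>\<^sup>+ x. ennreal \<bar>s (r i) x - s (r j) x\<bar> \<partial>M) \<le> ennreal e" .
    qed
    finally show ?thesis
      by (simp add: Liminf_const)
  qed
  have "(\<lambda>k. \<integral>\<^sup>+ x. ennreal \<bar>s (r k) x - f x\<bar> \<partial>M) \<longlonglongrightarrow> 0"
  proof (rule tendsto_zero_ennreal)
    fix e :: real
    assume "0 < e"
    then obtain N where N: "\<forall>i\<ge>N. \<forall>j\<ge>N. (\<integral>x. \<bar>s i x - s j x\<bar> \<partial>M) < e / 2"
      using Cauchy by (meson half_gt_zero)
    have "(\<integral>\<^sup>+ x. ennreal \<bar>s (r i) x - f x\<bar> \<partial>M) < ennreal e" if "N \<le> i" for i
      using small[OF _ N that] \<open>0 < e\<close> by (auto elim: order.strict_trans1 simp: ennreal_lessI)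
    then show "eventually (\<lambda>k. (\<integral>\<^sup>+ x. ennreal \<bar>s (r k) x - f x\<bar> \<partial>M) < ennreal e) sequentially"
      using eventually_sequentially by blast
  qed
  with r \<open>f \<in> borel_measurable M\<close> show thesis
    by (rule that)
qed

theorem (in prob_space) convex_functional_attains_min:
  fixes phi :: "('a \<Rightarrow> real) \<Rightarrow> real"
  assumes D: "D \<subseteq> Pset M" "D \<noteq> {}" "L1_closed M D" "unif_integrable M D"
    and D_mid: "\<And>Z1 Z2. Z1 \<in> D \<Longrightarrow> Z2 \<in> D \<Longrightarrow> (\<lambda>x. (Z1 x + Z2 x) / 2) \<in> D"
    and phi_mid: "\<And>Z1 Z2. Z1 \<in> D \<Longrightarrow> Z2 \<in> D \<Longrightarrow> phi (\<lambda>x. (Z1 x + Z2 x) / 2) \<le> (phi Z1 + phi Z2) / 2"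
    and phi_bdd: "bdd_below (phi ` D)"
    and phi_cont: "\<forall>e>0. \<exists>\<delta>>0. \<forall>Z1\<in>D. \<forall>Z2\<in>D. (\<integral>x. \<bar>Z1 x - Z2 x\<bar> \<partial>M) < \<delta> \<longrightarrow> \<bar>phi Z1 - phi Z2\<bar> < e"
  shows "\<exists>f\<in>D. \<forall>Z\<in>D. phi f \<le> phi Z"
proof -
  have uniformly_convex: "\<exists>\<gamma>>0. \<forall>Z1\<in>D. \<forall>Z2\<in>D.
      ((\<integral>x. inv1p (Z1 x) \<partial>M) + (\<integral>x. inv1p (Z2 x) \<partial>M)) / 2 - (\<integral>x. inv1p ((Z1 x + Z2 x) / 2) \<partial>M) < \<gamma>
      \<longrightarrow> (\<integral>x. \<bar>Z1 x - Z2 x\<bar> \<partial>M) < e" if "0 < e" for e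
    using L1_close_if_inv1p_defect_small[OF D(1,4) that] .
  have H_bounded: "\<bar>\<integral>x. inv1p (Z x) \<partial>M\<bar> \<le> 1" if "Z \<in> D" for Z
    using that D(1) by (intro abs_integral_inv1p_le_1) (auto simp: Pset_def)
  obtain zs where zs: "\<forall>k. zs k \<in> D" and lim: "(\<lambda>k. phi (zs k)) \<longlonglongrightarrow> Inf (phi ` D)"
    and Cauchy: "\<forall>e>0. \<exists>N. \<forall>i\<ge>N. \<forall>j\<ge>N. (\<integral>x. \<bar>zs i x - zs j x\<bar> \<partial>M) < e"
    by (rule midpoint_convex_minimizing_Cauchy[where A = D and phi = phi
          and H = "\<lambda>Z. \<integral>x. inv1p (Z x) \<partial>M" and B = 1 and d = "\<lambda>Z1 Z2. \<integral>x. \<bar>Z1 x - Z2 x\<bar> \<partial>M"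
          and mid = "\<lambda>Z1 Z2 x. (Z1 x + Z2 x) / 2"])
      (use D(2) D_mid phi_mid phi_bdd H_bounded uniformly_convex in auto)
  have int: "integrable M (zs k)" for k
    using zs D(1) by (auto simp: Pset_def)
  obtain r f where r: "strict_mono r" and fm [measurable]: "f \<in> borel_measurable M"
    and conv: "(\<lambda>k. \<integral>\<^sup>+ x. ennreal \<bar>zs (r k) x - f x\<bar> \<partial>M) \<longlonglongrightarrow> 0"
    using L1_Cauchy_subseq_converges[OF int Cauchy] by blast
  have "f \<in> D"
    using D(3)[unfolded L1_closed_def, rule_format, of "\<lambda>k. zs (r k)" f] zs fm conv by simp
  have dist_lim: "(\<lambda>k. \<integral>x. \<bar>zs (r k) x - f x\<bar> \<partial>M) \<longlonglongrightarrow> 0"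
  proof -
    have "integrable M f"
      using \<open>f \<in> D\<close> D(1) by (auto simp: Pset_def)
    then have "(\<integral>\<^sup>+ x. ennreal \<bar>zs (r k) x - f x\<bar> \<partial>M) = ennreal (\<integral>x. \<bar>zs (r k) x - f x\<bar> \<partial>M)" for k
      using int by (intro nn_integral_eq_integral) auto
    then show ?thesis
      using conv by (simp add: ennreal_tendsto_0_iff)
  qed
  have "\<forall>k. zs (r k) \<in> D"
    using zs by blast
  from phi_cont this \<open>f \<in> D\<close> dist_lim have "(\<lambda>k. phi (zs (r k))) \<longlonglongrightarrow> phi f"
    by (rule uniformly_continuous_tendsto[where d = "\<lambda>Z1 Z2. \<integral>x. \<bar>Z1 x - Z2 x\<bar> \<partial>M"])
  moreover have "(\<lambda>k. phi (zs (r k))) \<longlonglongrightarrow> Inf (phi ` D)"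
    using LIMSEQ_subseq_LIMSEQ[OF lim r] by (simp add: comp_def)
  ultimately have "phi f = Inf (phi ` D)"
    by (rule LIMSEQ_unique)
  then have "phi f \<le> phi Z" if "Z \<in> D" for Z
    using phi_bdd that by (simp add: cInf_lower)
  with \<open>f \<in> D\<close> show ?thesis
    by blast
qed

lemma (in sigma_finite_subalgebra) cond_exp_pairing_attains_min:
  assumes "prob_space M"
    and D: "D \<subseteq> Pset M" "D \<noteq> {}" "L1_closed M D" "unif_integrable M D"
    and D_mid: "\<And>Z1 Z2. Z1 \<in> D \<Longrightarrow> Z2 \<in> D \<Longrightarrow> (\<lambda>x. (Z1 x + Z2 x) / 2) \<in> D"
    and W: "W \<in> L1s M (real_cond_exp M F ` D)"
  obtains f where "f \<in> D"
    and "\<And>Z. Z \<in> D \<Longrightarrow> (\<integral>x. real_cond_exp M F f x * W x \<partial>M) \<le> (\<integral>x. real_cond_exp M F Z x * W x \<partial>M)"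
proof -
  let ?Q = "real_cond_exp M F"
  define phi where "phi Z = (\<integral>x. ?Q Z x * W x \<partial>M)" for Z
  have C: "?Q ` D \<subseteq> Pset M"
    using D(1) real_cond_exp_Pset by blast
  have int: "integrable M Z" if "Z \<in> D" for Z
    using that D(1) by (auto simp: Pset_def)
  have phi_mid: "phi (\<lambda>x. (Z1 x + Z2 x) / 2) \<le> (phi Z1 + phi Z2) / 2" if "Z1 \<in> D" "Z2 \<in> D" for Z1 Z2
  proof -
    have "AE x in M. ?Q (\<lambda>x. (Z1 x + Z2 x) / 2) x * W x = (?Q Z1 x * W x + ?Q Z2 x * W x) / 2"
      using real_cond_exp_midpoint[OF int[OF that(1)] int[OF that(2)]]
      by eventually_elim (simp add: field_simps)
    then have "phi (\<lambda>x. (Z1 x + Z2 x) / 2) = (\<integral>x. (?Q Z1 x * W x + ?Q Z2 x * W x) / 2 \<partial>M)"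
      unfolding phi_def using L1s_measurable[OF W C] by (intro integral_cong_AE) auto
    also have "\<dots> = (phi Z1 + phi Z2) / 2"
      unfolding phi_def using L1s_integrable[OF W C] that by simp
    finally show ?thesis
      by simp
  qed
  have phi_bdd: "bdd_below (phi ` D)"
  proof -
    obtain B where "\<And>Q. Q \<in> ?Q ` D \<Longrightarrow> \<bar>\<integral>x. Q x * W x \<partial>M\<bar> \<le> B"
      using L1s_integral_bounded[OF W C] by blast
    then show ?thesis
      unfolding phi_def by (intro bdd_belowI[of _ "- B"]) (force simp: abs_le_iff)
  qed
  have phi_cont: "\<forall>e>0. \<exists>\<delta>>0. \<forall>Z1\<in>D. \<forall>Z2\<in>D. (\<integral>x. \<bar>Z1 x - Z2 x\<bar> \<partial>M) < \<delta> \<longrightarrow> \<bar>phi Z1 - phi Z2\<bar> < e"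
  proof (intro allI impI)
    fix e :: real
    assume e: "0 < e"
    obtain \<delta> where "0 < \<delta>" and \<delta>: "\<forall>Q1\<in>?Q ` D. \<forall>Q2\<in>?Q ` D. (\<integral>x. \<bar>Q1 x - Q2 x\<bar> \<partial>M) < \<delta> \<longrightarrow>
        \<bar>(\<integral>x. Q1 x * W x \<partial>M) - (\<integral>x. Q2 x * W x \<partial>M)\<bar> < e"
      using L1s_integral_uniformly_continuous[OF W C e] by blast
    have "\<bar>phi Z1 - phi Z2\<bar> < e" if "Z1 \<in> D" "Z2 \<in> D" "(\<integral>x. \<bar>Z1 x - Z2 x\<bar> \<partial>M) < \<delta>" for Z1 Z2
      using \<delta> that real_cond_exp_L1_dist_le[OF int[OF that(1)] int[OF that(2)]]
      unfolding phi_def by fastforce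
    with \<open>0 < \<delta>\<close> show "\<exists>\<delta>>0. \<forall>Z1\<in>D. \<forall>Z2\<in>D. (\<integral>x. \<bar>Z1 x - Z2 x\<bar> \<partial>M) < \<delta> \<longrightarrow> \<bar>phi Z1 - phi Z2\<bar> < e"
      by blast
  qed
  have "\<exists>f\<in>D. \<forall>Z\<in>D. phi f \<le> phi Z"
    by (rule prob_space.convex_functional_attains_min[where phi = phi])
      (use assms(1) D D_mid phi_mid phi_bdd phi_cont in auto)
  then show thesis
    unfolding phi_def using that by blast
qed

lemma sigma_finite_subalgebra_vimage_algebra:
  assumes "prob_space M" and "Y \<in> measurable M N"
  shows "sigma_finite_subalgebra M (vimage_algebra (space M) Y N)"
proof -
  have "subalgebra M (vimage_algebra (space M) Y N)"
    unfolding subalgebra_def using sets_image_in_sets[OF refl assms(2)] by simp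
  then show ?thesis
    using assms(1)
    by (intro finite_measure_subalgebra_is_sigma_finite)
      (simp add: finite_measure_subalgebra_def finite_measure_subalgebra_axioms_def prob_space.finite_measure)
qed

theorem proposition6p2:
  fixes M :: "'a measure" and u :: "('a \<Rightarrow> real) \<Rightarrow> ereal"
    and Y :: "'a \<Rightarrow> 'b::euclidean_space" and W :: "'a \<Rightarrow> real"
  assumes "prob_space M"
    and "coherent_utility M u"
    and "D = determining_set M u"
    and "L1_closed M D"
    and "unif_integrable M D"
    and "Y \<in> borel_measurable M"
    and "W \<in> L1s M (cond_set M D Y)"
  shows "extreme_set M D Y W \<noteq> {}"
proof -
  define F where "F = vimage_algebra (space M) Y borel"
  interpret sigma_finite_subalgebra M F
    unfolding F_def using assms(1,6) by (rule sigma_finite_subalgebra_vimage_algebra)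
  let ?pair = "\<lambda>Z. \<integral>x. real_cond_exp M F Z x * W x \<partial>M"
  have D: "D \<subseteq> Pset M" "D \<noteq> {}"
    using assms(2,3) determining_set_nonempty by (auto simp: determining_set_def)
  have D_mid: "(\<lambda>x. (Z1 x + Z2 x) / 2) \<in> D" if "Z1 \<in> D" "Z2 \<in> D" for Z1 Z2
    using that unfolding assms(3) by (rule determining_set_midpoint)
  have C: "cond_set M D Y = real_cond_exp M F ` D"
    by (simp add: cond_set_def F_def)
  have W: "W \<in> L1s M (real_cond_exp M F ` D)" and C_densities: "real_cond_exp M F ` D \<subseteq> Pset M"
    using assms(7) D(1) real_cond_exp_Pset by (auto simp: C)
  obtain f where "f \<in> D" and f_min: "\<And>Z. Z \<in> D \<Longrightarrow> ?pair f \<le> ?pair Z"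
    by (rule cond_exp_pairing_attains_min[OF assms(1) D(1,2) assms(4,5) D_mid W]) auto
  have EQ: "EQ M (real_cond_exp M F Z) W = ereal (?pair Z)" if "Z \<in> D" for Z
    using that by (intro L1s_EQ_eq_integral[OF W C_densities]) simp
  have "uf M D W Y = ereal (?pair f)"
    unfolding uf_def C image_image using \<open>f \<in> D\<close> f_min EQ by (intro INF_eqI) auto
  then have "real_cond_exp M F f \<in> extreme_set M D Y W"
    using \<open>f \<in> D\<close> EQ unfolding extreme_set_def C by auto
  then show ?thesis
    by blast
qed

end
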